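(* Let $G$ be a digraph on $n$ vertices and let $\mathcal{P}=\{V_{ij}:i,j\in[2]\}$ be a $4$-partition of $V(G)$ with $|V_{12}|=|V_{21}|>0$. Suppose that for every $i\in[2]$ and every proper $i$-pair $\phi^i$ with respect to $\mathcal{P}$, the digraph $\mathcal{J}^i(\mathcal{P},G,\phi^i)$ contains a Hamilton cycle. Then $G$ contains a Hamilton cycle.
   Context: A $4$-partition of $V(G)$ is a family $\{V_{ij}:i,j\in[2]\}$ of pairwise disjoint (possibly empty) sets with union $V(G)$; $V_{i*}=V_{i1}\cup V_{i2}$, $V_{*i}=V_{1i}\cup V_{2i}$. Let $t=|V_{12}|=|V_{21}|$ and treat $[t]=\{1,\dots,t\}$ as a set disjoint from $V(G)$. For $i\in[2]$, a proper $i$-pair with respect to $\mathcal{P}$ is a pair $\phi^i=(\phi_{i*},\phi_{*i})$ of bijections $\phi_{i*}:[t]\cup V_{ii}\to V_{i*}$ and $\phi_{*i}:[t]\cup V_{ii}\to V_{*i}$ with $\phi_{i*}(x)=\phi_{*i}(x)=x$ for all $x\in V_{ii}$. The digraph $\mathcal{J}^i(\mathcal{P},G,\phi^i)$ has vertex set $[t]\cup V_{ii}$, and for $a,b$ in this set, $ab$ is an edge (a loop if $a=b$) iff $\phi_{i*}(a)\phi_{*i}(b)\in E(G)$. A Hamilton cycle is a directed cycle through all vertices (loops play no role). *)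

theory Defs
  imports Main
begin

(* A digraph is given by a finite vertex set V and an edge relation E \<subseteq> V \<times> V.
   A 4-partition is a map P with P i j = V_ij for i,j \<in> {1,2}. *)

definition four_partition :: "'a set \<Rightarrow> (nat \<Rightarrow> nat \<Rightarrow> 'a set) \<Rightarrow> bool" where
  "four_partition V P \<longleftrightarrow>
     (\<forall>i\<in>{1,2}. \<forall>j\<in>{1,2}. \<forall>i'\<in>{1,2}. \<forall>j'\<in>{1,2}.
        (i, j) \<noteq> (i', j') \<longrightarrow> P i j \<inter> P i' j' = {}) \<and>
     (\<Union>i\<in>{1,2}. \<Union>j\<in>{1,2}. P i j) = V"

definition row_part :: "(nat \<Rightarrow> nat \<Rightarrow> 'a set) \<Rightarrow> nat \<Rightarrow> 'a set" where
  "row_part P i = P i 1 \<union> P i 2"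

definition col_part :: "(nat \<Rightarrow> nat \<Rightarrow> 'a set) \<Rightarrow> nat \<Rightarrow> 'a set" where
  "col_part P i = P 1 i \<union> P 2 i"

(* vertex set [t] \<union> V_ii, with [t] represented by Inr 1..Inr t (disjoint from V(G)) *)
definition J_verts :: "(nat \<Rightarrow> nat \<Rightarrow> 'a set) \<Rightarrow> nat \<Rightarrow> nat \<Rightarrow> ('a + nat) set" where
  "J_verts P t i = Inr ` {1..t} \<union> Inl ` P i i"

definition proper_pair ::
  "(nat \<Rightarrow> nat \<Rightarrow> 'a set) \<Rightarrow> nat \<Rightarrow> nat \<Rightarrow> ('a + nat \<Rightarrow> 'a) \<Rightarrow> ('a + nat \<Rightarrow> 'a) \<Rightarrow> bool" where
  "proper_pair P t i f g \<longleftrightarrow>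
     bij_betw f (J_verts P t i) (row_part P i) \<and>
     bij_betw g (J_verts P t i) (col_part P i) \<and>
     (\<forall>x\<in>P i i. f (Inl x) = x \<and> g (Inl x) = x)"

definition J_edges ::
  "(nat \<Rightarrow> nat \<Rightarrow> 'a set) \<Rightarrow> nat \<Rightarrow> nat \<Rightarrow> ('a \<times> 'a) set \<Rightarrow> ('a + nat \<Rightarrow> 'a) \<Rightarrow> ('a + nat \<Rightarrow> 'a)
     \<Rightarrow> (('a + nat) \<times> ('a + nat)) set" where
  "J_edges P t i E f g =
     {(a, b). a \<in> J_verts P t i \<and> b \<in> J_verts P t i \<and> (f a, g b) \<in> E}"

(* Hamilton cycle: cyclic ordering v_0,...,v_{m-1} of all vertices (distinct),
   with edges v_k v_{k+1 mod m}.  For m \<ge> 2 loops are never used. *)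
definition hamiltonian :: "'v set \<Rightarrow> ('v \<times> 'v) set \<Rightarrow> bool" where
  "hamiltonian V E \<longleftrightarrow>
     (\<exists>vs. vs \<noteq> [] \<and> distinct vs \<and> set vs = V \<and>
        (\<forall>k<length vs. (vs ! k, vs ! ((k + 1) mod length vs)) \<in> E))"

end

(*
  Fix bijections h12, h21 from [t] onto V12 and V21 and take them as the proper 1-pair.
  A Hamilton cycle of J^1, read in G, is a family of t vertex-disjoint paths covering V11:
  the one leaving label k runs from h12 k through V11 and ends at h21 (\<sigma> k), where \<sigma> k is
  the next label on the cycle, and \<sigma> is a permutation of [t].  The proper 2-pair
  (h21 \<circ> \<sigma>, h12) contracts each of these paths into its label, so a Hamilton cycle of J^2
  joins them, together with V22, into a single spanning cycle of G.

  Cycles are handled as successor functions with a single orbit (cyclic_on).  The successor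
  on V is glued from the two cycles, on V1* and on V2*, and it has a single orbit because
  every nonempty set of vertices closed under it is all of V.
*)

theory Submission
  imports Defs "HOL-Combinatorics.Orbits"
begin

section \<open>Hamilton cycles as successor functions with a single orbit\<close>

lemma cyclic_onI_closed:
  assumes "x \<in> S" and maps: "\<And>y. y \<in> S \<Longrightarrow> f y \<in> S"
    and minimal: "\<And>A. A \<subseteq> S \<Longrightarrow> A \<noteq> {} \<Longrightarrow> (\<And>y. y \<in> A \<Longrightarrow> f y \<in> A) \<Longrightarrow> A = S"
  shows "cyclic_on f S"
proof (rule cyclic_on_singleI)
  have "orbit f x \<subseteq> S"
  proof
    fix y assume "y \<in> orbit f x"
    then show "y \<in> S" by induction (use \<open>x \<in> S\<close> maps in blast)+
  qed
  from minimal[OF this orbit_nonempty orbit.step] show "S = orbit f x"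
    by (rule sym)
qed fact

lemma cyclic_on_induct:
  assumes "cyclic_on f S" "x \<in> S" and "P x"
    and preserved: "\<And>y. y \<in> S \<Longrightarrow> P y \<Longrightarrow> P (f y)"
  shows "\<forall>y\<in>S. P y"
proof
  have S: "S = orbit f x" using assms(1,2) by (simp add: cyclic_on_alldef)
  fix y assume "y \<in> S"
  then have "y \<in> orbit f x" using S by simp
  then show "P y"
  proof induction
    case base
    show ?case using assms(2,3) by (rule preserved)
  next
    case (step z)
    then show ?case using S by (intro preserved) simp_all
  qed
qed

lemma cyclic_on_image_eq:
  assumes "cyclic_on f S" shows "f ` S = S"
proof
  show "f ` S \<subseteq> S" using cyclic_on_inI[OF assms] by blast
  show "S \<subseteq> f ` S"
  proof
    fix y assume "y \<in> S"
    then have "y \<in> orbit f y" using assms by (simp add: cyclic_on_alldef)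
    then have "f ((f ^^ funpow_dist f (f y) y) y) = y"
      using funpow_dist1_prop by simp
    moreover have "(f ^^ funpow_dist f (f y) y) y \<in> S"
      using assms \<open>y \<in> S\<close> by (rule cyclic_on_funpow_in)
    ultimately show "y \<in> f ` S" by (metis imageI)
  qed
qed

lemma cyclic_on_bij_betw:
  assumes "cyclic_on f S" shows "bij_betw f S S"
  using assms by (simp add: bij_betw_def cyclic_on_image_eq eq_card_imp_inj_on finite_cyclic_on)

lemma funpow_Suc_mod: "((\<lambda>i. Suc i mod m) ^^ n) 0 = n mod (m::nat)"
  by (induction n) (simp_all add: mod_Suc_eq)

lemma cyclic_on_Suc_mod:
  assumes "0 < m" shows "cyclic_on (\<lambda>i. Suc i mod m) {..<m}"
proof (rule cyclic_on_singleI)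
  have "i \<in> orbit (\<lambda>i. Suc i mod m) 0" if "i < m" for i
    using that funpow_Suc_mod[where n = "i + m"] by (auto simp: orbit_altdef intro!: exI[of _ "i + m"])
  then show "{..<m} = orbit (\<lambda>i. Suc i mod m) 0"
    using assms by (auto simp: orbit_altdef funpow_Suc_mod)
qed (use assms in simp)

lemma hamiltonian_imp_cyclic_successor:
  assumes "hamiltonian W F"
  shows "\<exists>s. cyclic_on s W \<and> (\<forall>w\<in>W. (w, s w) \<in> F)"
proof -
  obtain vs where vs: "vs \<noteq> []" "distinct vs" "set vs = W"
    and edges: "\<forall>k<length vs. (vs ! k, vs ! ((k + 1) mod length vs)) \<in> F"
    using assms unfolding hamiltonian_def by blast
  define m where "m = length vs"
  define s where "s w = vs ! (Suc (the_inv_into {..<m} ((!) vs) w) mod m)" for w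
  have inj: "inj_on ((!) vs) {..<m}"
    using vs(2) by (simp add: inj_on_nth m_def)
  have s_nth: "s (vs ! i) = vs ! (Suc i mod m)" if "i < m" for i
    using that inj by (simp add: s_def the_inv_into_f_f)
  have W: "W = (!) vs ` {..<m}"
    using vs(3) by (auto simp: m_def in_set_conv_nth)
  have "cyclic_on (\<lambda>i. Suc i mod m) {..<m}"
    using vs(1) by (simp add: cyclic_on_Suc_mod m_def)
  then have "cyclic_on s W"
    unfolding W using s_nth by (rule cyclic_on_image) simp
  moreover have "\<forall>w\<in>W. (w, s w) \<in> F"
    using edges s_nth by (auto simp: W m_def)
  ultimately show ?thesis by blast
qed

lemma cyclic_successor_imp_hamiltonian:
  assumes cyclic: "cyclic_on s W" and edges: "\<forall>w\<in>W. (w, s w) \<in> F"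
  shows "hamiltonian W F"
proof -
  obtain x where x: "x \<in> W" "W = orbit s x"
    using cyclic by (auto simp: cyclic_on_def)
  then have x_orbit: "x \<in> orbit s x" by simp
  define p where "p = funpow_dist1 s x x"
  define vs where "vs = map (\<lambda>n. (s ^^ n) x) [0..<p]"
  have "inj_on (\<lambda>n. (s ^^ n) x) {0..<p}"
    unfolding p_def by (rule inj_on_funpow_dist1[OF x_orbit])
  then have "distinct vs"
    by (simp add: vs_def distinct_map)
  have "orbit s x = (\<lambda>n. (s ^^ n) x) ` {0..<p}"
    unfolding p_def by (rule orbit_conv_funpow_dist1[OF x_orbit])
  then have "set vs = W"
    using x(2) by (simp add: vs_def)
  have length_vs: "length vs = p" and nth_vs: "\<And>k. k < p \<Longrightarrow> vs ! k = (s ^^ k) x"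
    by (simp_all add: vs_def)
  have "p > 0" and return: "(s ^^ p) x = x"
    using funpow_dist1_prop[OF x_orbit] by (simp_all add: p_def)
  have "vs ! ((k + 1) mod length vs) = s (vs ! k)" if "k < length vs" for k
  proof (cases "Suc k < p")
    case True then show ?thesis using that by (simp add: length_vs nth_vs)
  next
    case False
    then have "Suc k = p" using that by (simp add: length_vs)
    then show ?thesis using that return \<open>p > 0\<close> by (auto simp: length_vs nth_vs)
  qed
  moreover have "vs ! k \<in> W" if "k < length vs" for k
    using that \<open>set vs = W\<close> nth_mem by blast
  ultimately have "\<forall>k<length vs. (vs ! k, vs ! ((k + 1) mod length vs)) \<in> F"
    using edges by simp
  moreover have "vs \<noteq> []"
    using \<open>p > 0\<close> length_vs by auto
  ultimately show ?thesis
    unfolding hamiltonian_def using \<open>distinct vs\<close> \<open>set vs = W\<close> by blast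
qed

lemma hamiltonian_iff_cyclic_successor:
  "hamiltonian W F \<longleftrightarrow> (\<exists>s. cyclic_on s W \<and> (\<forall>w\<in>W. (w, s w) \<in> F))"
  using hamiltonian_imp_cyclic_successor cyclic_successor_imp_hamiltonian by blast

lemma obtain_J_successor:
  assumes "hamiltonian (J_verts P t i) (J_edges P t i E f g)"
  obtains s where "cyclic_on s (J_verts P t i)" "\<And>a. a \<in> J_verts P t i \<Longrightarrow> (f a, g (s a)) \<in> E"
  using assms unfolding hamiltonian_iff_cyclic_successor J_edges_def by blast

section \<open>First-return maps\<close>

definition return_time :: "('a \<Rightarrow> 'a) \<Rightarrow> 'a set \<Rightarrow> 'a \<Rightarrow> nat" where
  "return_time f T x = (LEAST n. 0 < n \<and> (f ^^ n) x \<in> T)"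

definition first_return :: "('a \<Rightarrow> 'a) \<Rightarrow> 'a set \<Rightarrow> 'a \<Rightarrow> 'a" where
  "first_return f T x = (f ^^ return_time f T x) x"

lemma not_in_before_return_time:
  assumes "0 < i" "i < return_time f T x" shows "(f ^^ i) x \<notin> T"
  using assms not_less_Least unfolding return_time_def by blast

context
  fixes f :: "'a \<Rightarrow> 'a" and S T :: "'a set"
  assumes cyclic: "cyclic_on f S" and T_subset: "T \<subseteq> S" and T_nonempty: "T \<noteq> {}"
begin

lemma return_time_pos: "x \<in> S \<Longrightarrow> 0 < return_time f T x"
  and first_return_in: "x \<in> S \<Longrightarrow> first_return f T x \<in> T"
proof -
  assume "x \<in> S"
  obtain y where "y \<in> T" using T_nonempty by blast
  then have "y \<in> orbit f x" using \<open>x \<in> S\<close> cyclic T_subset by (auto simp: cyclic_on_alldef)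
  then have "\<exists>n. 0 < n \<and> (f ^^ n) x \<in> T" using \<open>y \<in> T\<close> by (auto simp: orbit_altdef)
  then have "0 < return_time f T x \<and> first_return f T x \<in> T"
    unfolding first_return_def return_time_def by (rule LeastI_ex)
  then show "0 < return_time f T x" "first_return f T x \<in> T" by auto
qed

lemma first_return_induct:
  assumes "x \<in> S" and "P (f x)" and step: "\<And>y. y \<in> S - T \<Longrightarrow> P y \<Longrightarrow> P (f y)"
  shows "P (first_return f T x)"
proof -
  have "P ((f ^^ n) x)" if "0 < n" "n \<le> return_time f T x" for n
    using that
  proof (induction n)
    case (Suc n)
    show ?case
    proof (cases "n = 0")
      case True then show ?thesis using assms(2) by simp
    next
      case False
      then have "(f ^^ n) x \<in> S - T"
        using Suc.prems False not_in_before_return_time[of n f T x] cyclic_on_funpow_in[OF cyclic assms(1)]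
        by simp
      then show ?thesis using Suc False step by simp
    qed
  qed simp
  then show ?thesis
    using return_time_pos[OF assms(1)] unfolding first_return_def by blast
qed

lemma first_return_eq_imp_eq:
  assumes "x \<in> T" "y \<in> T" "first_return f T x = first_return f T y"
    and le: "return_time f T x \<le> return_time f T y"
  shows "x = y"
proof -
  define n m where "n = return_time f T x" and "m = return_time f T y"
  have "y \<in> S" "x \<in> S" using assms(1,2) T_subset by auto
  have "(f ^^ n) ((f ^^ (m - n)) y) = (f ^^ (n + (m - n))) y"
    by (simp only: funpow_add comp_apply)
  also have "\<dots> = first_return f T x"
    using assms(3) le by (simp add: first_return_def n_def m_def)
  finally have "(f ^^ n) ((f ^^ (m - n)) y) = (f ^^ n) x"
    by (simp only: first_return_def n_def)
  moreover have "inj_on (f ^^ n) S"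
    using bij_betw_funpow[OF cyclic_on_bij_betw[OF cyclic]] bij_betw_imp_inj_on by blast
  ultimately have x: "(f ^^ (m - n)) y = x"
    using cyclic_on_funpow_in[OF cyclic \<open>y \<in> S\<close>] \<open>x \<in> S\<close> by (auto dest: inj_onD)
  have "m - n = 0"
  proof (rule ccontr)
    assume "m - n \<noteq> 0"
    moreover have "0 < n"
      using return_time_pos[OF \<open>x \<in> S\<close>] by (simp add: n_def)
    ultimately have "(f ^^ (m - n)) y \<notin> T"
      using not_in_before_return_time[of "m - n" f T y] by (simp add: m_def)
    then show False using x assms(1) by simp
  qed
  then show ?thesis using x by simp
qed

lemma bij_betw_first_return: "bij_betw (first_return f T) T T"
proof -
  have "inj_on (first_return f T) T"
    using first_return_eq_imp_eq by (intro inj_onI) (metis nat_le_linear)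
  moreover have "first_return f T ` T \<subseteq> T"
    using first_return_in T_subset by blast
  moreover have "finite T"
    using T_subset cyclic finite_cyclic_on finite_subset by blast
  ultimately show ?thesis
    by (simp add: bij_betw_def endo_inj_surj)
qed

end

section \<open>Proper pairs built from bijections onto V12 and V21\<close>

lemma four_partition_disjoint:
  assumes "four_partition V P" "i \<in> {1,2}" "j \<in> {1,2}" "i' \<in> {1,2}" "j' \<in> {1,2}" "(i, j) \<noteq> (i', j')"
  shows "P i j \<inter> P i' j' = {}"
  using assms unfolding four_partition_def by blast

lemma four_partition_rows:
  assumes "four_partition V P"
  shows "V = row_part P 1 \<union> row_part P 2" and "row_part P 1 \<inter> row_part P 2 = {}"
proof -
  have "P 1 j \<inter> P 2 j' = {}" if "j \<in> {1,2}" "j' \<in> {1,2}" for j j'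
    using four_partition_disjoint[OF assms] that by simp
  then show "row_part P 1 \<inter> row_part P 2 = {}"
    unfolding row_part_def by blast
  show "V = row_part P 1 \<union> row_part P 2"
    using assms unfolding four_partition_def row_part_def by auto
qed

lemma four_partition_cols:
  assumes "four_partition V P" shows "V = col_part P 1 \<union> col_part P 2"
  using assms unfolding four_partition_def col_part_def by auto

lemma bij_betw_case_sum_id:
  assumes "bij_betw h A B" "C \<inter> B = {}"
  shows "bij_betw (case_sum id h) (Inr ` A \<union> Inl ` C) (B \<union> C)"
proof (rule bij_betw_combine)
  show "bij_betw (case_sum id h) (Inr ` A) B"
    using assms(1) by (auto simp: bij_betw_def inj_on_def image_image)
  show "bij_betw (case_sum id h) (Inl ` C) C"
    by (auto simp: bij_betw_def inj_on_def image_image)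
qed (use assms(2) in blast)

lemma proper_pair_case_sum:
  assumes "four_partition V P" "{i, j} = {1, 2}"
    and "bij_betw h {1..t} (P i j)" "bij_betw h' {1..t} (P j i)"
  shows "proper_pair P t i (case_sum id h) (case_sum id h')"
proof -
  have ij: "i \<in> {1,2}" "j \<in> {1,2}" "i \<noteq> j" using assms(2) by (auto simp: doubleton_eq_iff)
  have "row_part P i = P i j \<union> P i i" "col_part P i = P j i \<union> P i i"
    using ij by (auto simp: row_part_def col_part_def)
  moreover have "P i i \<inter> P i j = {}" "P i i \<inter> P j i = {}"
    using four_partition_disjoint[OF assms(1)] ij by auto
  ultimately show ?thesis
    unfolding proper_pair_def J_verts_def
    using bij_betw_case_sum_id[OF assms(3)] bij_betw_case_sum_id[OF assms(4)] by simp
qed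

section \<open>Gluing the Hamilton cycles of J^1 and J^2\<close>

locale J1_cycle =
  fixes V :: "'a set" and E :: "('a \<times> 'a) set" and P :: "nat \<Rightarrow> nat \<Rightarrow> 'a set"
    and t :: nat and h12 h21 :: "nat \<Rightarrow> 'a" and s1 :: "'a + nat \<Rightarrow> 'a + nat"
  assumes partition: "four_partition V P"
    and t_pos: "0 < t"
    and h12: "bij_betw h12 {1..t} (P 1 2)"
    and h21: "bij_betw h21 {1..t} (P 2 1)"
    and s1_cyclic: "cyclic_on s1 (J_verts P t 1)"
    and s1_edges: "\<And>a. a \<in> J_verts P t 1 \<Longrightarrow> (case_sum id h12 a, case_sum id h21 (s1 a)) \<in> E"
begin

abbreviation labels :: "('a + nat) set" where
  "labels \<equiv> Inr ` {1..t}"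

definition \<sigma> :: "nat \<Rightarrow> nat" where
  "\<sigma> k = projr (first_return s1 labels (Inr k))"

lemma first_return_label:
  assumes "k \<in> {1..t}" shows "first_return s1 labels (Inr k) = Inr (\<sigma> k)"
proof -
  have "first_return s1 labels (Inr k) \<in> labels"
    using first_return_in[OF s1_cyclic] assms by (auto simp: J_verts_def)
  then show ?thesis
    by (auto simp: \<sigma>_def)
qed

lemma bij_betw_\<sigma>: "bij_betw \<sigma> {1..t} {1..t}"
proof -
  have "bij_betw (first_return s1 labels) labels labels"
    using bij_betw_first_return[OF s1_cyclic] t_pos by (auto simp: J_verts_def)
  moreover have "bij_betw Inr {1..t} labels" "bij_betw projr labels {1..t}"
    by (auto simp: bij_betw_def inj_on_def image_image)
  ultimately have "bij_betw (projr \<circ> first_return s1 labels \<circ> Inr) {1..t} {1..t}"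
    by (meson bij_betw_trans)
  moreover have "\<sigma> = projr \<circ> first_return s1 labels \<circ> Inr"
    by (simp add: fun_eq_iff \<sigma>_def)
  ultimately show ?thesis
    by simp
qed

lemma proper_pair_2: "proper_pair P t 2 (case_sum id (h21 \<circ> \<sigma>)) (case_sum id h12)"
  by (rule proper_pair_case_sum[OF partition _ bij_betw_trans[OF bij_betw_\<sigma> h21] h12]) auto

end

locale J_cycles = J1_cycle +
  fixes s2 :: "'a + nat \<Rightarrow> 'a + nat"
  assumes s2_cyclic: "cyclic_on s2 (J_verts P t 2)"
    and s2_edges: "\<And>b. b \<in> J_verts P t 2 \<Longrightarrow> (case_sum id (h21 \<circ> \<sigma>) b, case_sum id h12 (s2 b)) \<in> E"
begin

abbreviation J1 :: "('a + nat) set" where "J1 \<equiv> J_verts P t 1"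
abbreviation J2 :: "('a + nat) set" where "J2 \<equiv> J_verts P t 2"
abbreviation f1 :: "'a + nat \<Rightarrow> 'a" where "f1 \<equiv> case_sum id h12"
abbreviation g1 :: "'a + nat \<Rightarrow> 'a" where "g1 \<equiv> case_sum id h21"
abbreviation f2 :: "'a + nat \<Rightarrow> 'a" where "f2 \<equiv> case_sum id (h21 \<circ> \<sigma>)"
abbreviation g2 :: "'a + nat \<Rightarrow> 'a" where "g2 \<equiv> case_sum id h12"

lemma bij_betw_f1: "bij_betw f1 J1 (row_part P 1)"
  and bij_betw_g1: "bij_betw g1 J1 (col_part P 1)"
  using proper_pair_case_sum[OF partition _ h12 h21] by (simp_all add: proper_pair_def)

lemma bij_betw_f2: "bij_betw f2 J2 (row_part P 2)"
  and bij_betw_g2: "bij_betw g2 J2 (col_part P 2)"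
  using proper_pair_2 by (simp_all add: proper_pair_def)

definition glued_succ :: "'a \<Rightarrow> 'a" where
  "glued_succ v =
     (if v \<in> row_part P 1 then g1 (s1 (inv_into J1 f1 v)) else g2 (s2 (inv_into J2 f2 v)))"

lemma glued_succ_f1: "a \<in> J1 \<Longrightarrow> glued_succ (f1 a) = g1 (s1 a)"
  using bij_betw_f1 by (simp add: glued_succ_def bij_betw_apply bij_betw_inv_into_left)

lemma glued_succ_f2:
  assumes "b \<in> J2" shows "glued_succ (f2 b) = g2 (s2 b)"
proof -
  have "f2 b \<notin> row_part P 1"
    using bij_betw_apply[OF bij_betw_f2 assms] four_partition_rows(2)[OF partition] by blast
  then show ?thesis
    using bij_betw_inv_into_left[OF bij_betw_f2 assms] by (simp add: glued_succ_def)
qed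

lemma glued_succ_edge_in:
  assumes "v \<in> V" shows "(v, glued_succ v) \<in> E" and "glued_succ v \<in> V"
proof -
  have "v \<in> f1 ` J1 \<union> f2 ` J2"
    using assms four_partition_rows(1)[OF partition] bij_betw_f1 bij_betw_f2
    by (simp add: bij_betw_imp_surj_on)
  moreover have "g1 ` J1 \<union> g2 ` J2 \<subseteq> V"
    using four_partition_cols[OF partition] bij_betw_g1 bij_betw_g2
    by (simp add: bij_betw_imp_surj_on)
  ultimately show "(v, glued_succ v) \<in> E" "glued_succ v \<in> V"
    using s1_edges s2_edges glued_succ_f1 glued_succ_f2
      cyclic_on_inI[OF s1_cyclic] cyclic_on_inI[OF s2_cyclic] by auto
qed

context
  fixes A :: "'a set"
  assumes A_closed: "\<And>v. v \<in> A \<Longrightarrow> glued_succ v \<in> A"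
begin

lemma closed_first_return:
  assumes "d \<in> J1" "f1 d \<in> A" shows "g1 (first_return s1 labels d) \<in> A"
proof (rule first_return_induct[OF s1_cyclic _ _ assms(1), where P = "\<lambda>w. g1 w \<in> A"])
  show "labels \<subseteq> J1" "labels \<noteq> {}"
    using t_pos by (auto simp: J_verts_def)
  show "g1 (s1 d) \<in> A"
    using A_closed[OF assms(2)] glued_succ_f1[OF assms(1)] by simp
  fix y assume y: "y \<in> J1 - labels" and "g1 y \<in> A"
  then obtain x where "y = Inl x"
    by (auto simp: J_verts_def)
  then have "g1 (s1 y) = glued_succ (g1 y)"
    using glued_succ_f1[of y] y by simp
  then show "g1 (s1 y) \<in> A"
    using A_closed[OF \<open>g1 y \<in> A\<close>] by simp
qed

lemma closed_f2_if_g2: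
  assumes "b \<in> J2" "g2 b \<in> A" shows "f2 b \<in> A"
proof (cases b)
  case (Inl x)
  then show ?thesis using assms(2) by simp
next
  case (Inr k)
  then have k: "k \<in> {1..t}" using assms(1) by (auto simp: J_verts_def)
  then have "g1 (first_return s1 labels (Inr k)) \<in> A"
    using closed_first_return assms(2) Inr by (simp add: J_verts_def)
  then show ?thesis using first_return_label[OF k] Inr by simp
qed

lemma closed_meets_row_2:
  assumes "A \<subseteq> V" "A \<noteq> {}" shows "\<exists>v\<in>A. v \<in> row_part P 2"
proof -
  obtain v where v: "v \<in> A" using assms(2) by blast
  show ?thesis
  proof (cases "v \<in> row_part P 2")
    case False
    then have "v \<in> f1 ` J1"
      using v assms(1) four_partition_rows(1)[OF partition] bij_betw_imp_surj_on[OF bij_betw_f1]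
      by blast
    then obtain d where d: "d \<in> J1" "v = f1 d" by blast
    then have "first_return s1 labels d \<in> labels"
      using first_return_in[OF s1_cyclic] t_pos by (auto simp: J_verts_def)
    then have "g1 (first_return s1 labels d) \<in> P 2 1"
      using h21 bij_betw_apply by fastforce
    then show ?thesis
      using closed_first_return d v by (auto simp: row_part_def)
  qed (use v in blast)
qed

lemma closed_contains_col_2:
  assumes "A \<subseteq> V" "A \<noteq> {}" shows "\<forall>b\<in>J2. g2 b \<in> A"
proof -
  obtain v where v: "v \<in> A" "v \<in> row_part P 2"
    using closed_meets_row_2[OF assms] by blast
  then have "v \<in> f2 ` J2"
    using bij_betw_imp_surj_on[OF bij_betw_f2] by simp
  then obtain b0 where b0: "b0 \<in> J2" "f2 b0 \<in> A"
    using v(1) by blast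
  have "s2 b0 \<in> J2"
    using b0(1) by (rule cyclic_on_inI[OF s2_cyclic])
  moreover have "g2 (s2 b0) \<in> A"
    using A_closed[OF b0(2)] glued_succ_f2[OF b0(1)] by simp
  moreover have "g2 (s2 b) \<in> A" if "b \<in> J2" "g2 b \<in> A" for b
    using A_closed[OF closed_f2_if_g2[OF that]] glued_succ_f2[OF that(1)] by simp
  ultimately show ?thesis
    by (rule cyclic_on_induct[OF s2_cyclic, where P = "\<lambda>b. g2 b \<in> A"])
qed

lemma closed_contains_row_1:
  assumes "P 1 2 \<subseteq> A" shows "\<forall>a\<in>J1. f1 a \<in> A"
proof (rule cyclic_on_induct[OF s1_cyclic])
  show "Inr 1 \<in> J1" "f1 (Inr 1) \<in> A"
    using t_pos assms bij_betw_apply[OF h12] by (auto simp: J_verts_def)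
  show "f1 (s1 a) \<in> A" if "a \<in> J1" "f1 a \<in> A" for a
  proof (cases "s1 a")
    case (Inl x)
    then have "f1 (s1 a) = glued_succ (f1 a)"
      using glued_succ_f1[OF that(1)] by simp
    then show ?thesis using A_closed[OF that(2)] by simp
  next
    case (Inr k)
    then have "k \<in> {1..t}"
      using cyclic_on_inI[OF s1_cyclic that(1)] by (auto simp: J_verts_def)
    then show ?thesis using Inr assms bij_betw_apply[OF h12] by auto
  qed
qed

lemma closed_eq:
  assumes "A \<subseteq> V" "A \<noteq> {}" shows "A = V"
proof -
  have "g2 ` J2 \<subseteq> A" "f2 ` J2 \<subseteq> A"
    using closed_contains_col_2[OF assms] closed_f2_if_g2 by auto
  then have "col_part P 2 \<subseteq> A" "row_part P 2 \<subseteq> A"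
    using bij_betw_imp_surj_on[OF bij_betw_g2] bij_betw_imp_surj_on[OF bij_betw_f2] by simp_all
  then have "f1 ` J1 \<subseteq> A"
    using closed_contains_row_1 by (auto simp: col_part_def)
  then have "row_part P 1 \<subseteq> A"
    using bij_betw_imp_surj_on[OF bij_betw_f1] by simp
  then show ?thesis
    using \<open>row_part P 2 \<subseteq> A\<close> assms(1) four_partition_rows(1)[OF partition] by blast
qed

end

lemma cyclic_on_glued_succ: "cyclic_on glued_succ V"
proof (rule cyclic_onI_closed)
  show "h12 1 \<in> V"
    using t_pos bij_betw_apply[OF h12] four_partition_rows(1)[OF partition]
    by (auto simp: row_part_def)
  show "glued_succ v \<in> V" if "v \<in> V" for v
    using that by (rule glued_succ_edge_in(2))
  show "A = V" if "A \<subseteq> V" "A \<noteq> {}" "\<And>v. v \<in> A \<Longrightarrow> glued_succ v \<in> A" for A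
    by (intro closed_eq) (use that in auto)
qed

lemma hamiltonian_glued: "hamiltonian V E"
  by (rule cyclic_successor_imp_hamiltonian[OF cyclic_on_glued_succ]) (use glued_succ_edge_in(1) in blast)

end

theorem proposition5p1:
  fixes V :: "'a set" and E :: "('a \<times> 'a) set" and P :: "nat \<Rightarrow> nat \<Rightarrow> 'a set"
  assumes "finite V"
    and "E \<subseteq> V \<times> V"
    and "four_partition V P"
    and "card (P 1 2) = card (P 2 1)"
    and "card (P 1 2) > 0"
    and "\<forall>i\<in>{1,2}. \<forall>f g. proper_pair P (card (P 1 2)) i f g \<longrightarrow>
           hamiltonian (J_verts P (card (P 1 2)) i) (J_edges P (card (P 1 2)) i E f g)"
  shows "hamiltonian V E"
proof -
  define t where "t = card (P 1 2)"
  have "finite (P 1 2)" "finite (P 2 1)"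
    using assms(4,5) card_gt_0_iff by fastforce+
  then obtain h12 h21 where h12: "bij_betw h12 {1..t} (P 1 2)" and h21: "bij_betw h21 {1..t} (P 2 1)"
    using ex_bij_betw_nat_finite_1 assms(4) unfolding t_def by metis
  have J_hamiltonian: "hamiltonian (J_verts P t i) (J_edges P t i E f g)"
    if "proper_pair P t i f g" "i \<in> {1,2}" for i f g
    using assms(6) that unfolding t_def by blast
  have "proper_pair P t 1 (case_sum id h12) (case_sum id h21)"
    by (rule proper_pair_case_sum[OF assms(3) _ h12 h21]) auto
  then obtain s1 where "cyclic_on s1 (J_verts P t 1)"
    and "\<And>a. a \<in> J_verts P t 1 \<Longrightarrow> (case_sum id h12 a, case_sum id h21 (s1 a)) \<in> E"
    by (rule obtain_J_successor[OF J_hamiltonian]) auto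
  then interpret J1_cycle V E P t h12 h21 s1
    using assms(3,5) h12 h21 by unfold_locales (simp_all add: t_def)
  obtain s2 where "cyclic_on s2 (J_verts P t 2)"
    and "\<And>b. b \<in> J_verts P t 2 \<Longrightarrow> (case_sum id (h21 \<circ> \<sigma>) b, case_sum id h12 (s2 b)) \<in> E"
    using proper_pair_2 by (rule obtain_J_successor[OF J_hamiltonian]) auto
  then interpret J_cycles V E P t h12 h21 s1 s2
    by unfold_locales
  show ?thesis
    by (rule hamiltonian_glued)
qed

end
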